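(* Let $K$ be a finite commutative ring, $G$ a group, $\alpha:G\times G\to U(K)$ a 2-cocycle, and $R=K^\alpha G$ the twisted group ring. Let $T_1,T_2\subseteq R$ be subsets such that any two elements of $T_1$ commute, and let $(-)^*:T_2\to R$ be a map satisfying $x\,y^*=y\,x^*$ for all $x,y\in T_2$. Let $L^1_1,\dots,L^1_{n_1}\in T_1$, $L^2_1,\dots,L^2_{n_2}\in T_2$, $h\in R$, $a,c\in T_1$ and $b,d\in T_2$. Suppose that integers $z_{ij}$ ($1\le i\le n_1$, $1\le j\le n_2$) satisfy \[ ahb=\sum_{i=1}^{n_1}\sum_{j=1}^{n_2} z_{ij}\,L^1_i\,h\,L^2_j. \] Then \[ \sum_{i=1}^{n_1}\sum_{j=1}^{n_2} z_{ij}\,L^1_i\,(chd)\,(L^2_j)^* \;=\; c\,a\,h\,b\,d^*. \]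
   Context: $U(K)$ is the group of units of $K$. A 2-cocycle is a map $\alpha:G\times G\to U(K)$ with $\alpha(g,1)=\alpha(1,g)=1$ and $\alpha(g,h)\alpha(gh,k)=\alpha(g,hk)\alpha(h,k)$ for all $g,h,k\in G$. The twisted group ring $K^\alpha G$ is the free $K$-module with basis $\{\overline g:g\in G\}$ and multiplication $(a\overline g)(b\overline h)=ab\,\alpha(g,h)\,\overline{gh}$ extended bilinearly. Integer coefficients $z_{ij}$ act by repeated addition (e.g. coefficients in the prime field $\mathbb{Z}_p$ when $R$ has characteristic $p$). This is used in the key exchange where Alice publishes $ahb$, Bob publishes $chd$, and the shared key is $a(chd)b^*=c(ahb)d^*$. *)

theory Defs
  imports "HOL-Algebra.Ring"
begin

definition two_cocycle :: "('g, 'b) monoid_scheme \<Rightarrow> ('g \<Rightarrow> 'g \<Rightarrow> 'k::comm_ring_1) \<Rightarrow> bool" where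
  "two_cocycle G \<alpha> \<longleftrightarrow>
     (\<forall>g\<in>carrier G. \<forall>h\<in>carrier G. \<alpha> g h dvd 1) \<and>
     (\<forall>g\<in>carrier G. \<alpha> g \<one>\<^bsub>G\<^esub> = 1 \<and> \<alpha> \<one>\<^bsub>G\<^esub> g = 1) \<and>
     (\<forall>g\<in>carrier G. \<forall>h\<in>carrier G. \<forall>k\<in>carrier G.
        \<alpha> g h * \<alpha> (g \<otimes>\<^bsub>G\<^esub> h) k = \<alpha> g (h \<otimes>\<^bsub>G\<^esub> k) * \<alpha> h k)"

text \<open>The twisted group ring K^alpha G: elements are finitely supported functions
  carrier G -> K (the coefficient of the basis element g-bar is f g), with
  (a g-bar)(b h-bar) = a b alpha(g,h) (gh)-bar extended bilinearly.\<close>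

definition tw_carrier :: "('g, 'b) monoid_scheme \<Rightarrow> ('g \<Rightarrow> 'k::comm_ring_1) set" where
  "tw_carrier G = {f. (\<forall>x. x \<notin> carrier G \<longrightarrow> f x = 0) \<and> finite {x. f x \<noteq> 0}}"

definition tw_mult :: "('g, 'b) monoid_scheme \<Rightarrow> ('g \<Rightarrow> 'g \<Rightarrow> 'k::comm_ring_1)
    \<Rightarrow> ('g \<Rightarrow> 'k) \<Rightarrow> ('g \<Rightarrow> 'k) \<Rightarrow> ('g \<Rightarrow> 'k)" where
  "tw_mult G \<alpha> f h = (\<lambda>x. \<Sum>(g, k) \<in> {(g, k). f g \<noteq> 0 \<and> h k \<noteq> 0 \<and> g \<otimes>\<^bsub>G\<^esub> k = x}.
       f g * h k * \<alpha> g k)"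

definition twisted_group_ring :: "('g, 'b) monoid_scheme \<Rightarrow> ('g \<Rightarrow> 'g \<Rightarrow> 'k::comm_ring_1)
    \<Rightarrow> ('g \<Rightarrow> 'k) ring" where
  "twisted_group_ring G \<alpha> =
     \<lparr> carrier = tw_carrier G,
       mult = tw_mult G \<alpha>,
       one = (\<lambda>x. if x = \<one>\<^bsub>G\<^esub> then 1 else 0),
       zero = (\<lambda>x. 0),
       add = (\<lambda>f h x. f x + h x) \<rparr>"

end

theory Submission
  imports Defs
begin

(* Since every L1 i commutes with c and d (L2 j)* = L2 j d*, each summand L1 i (c h d) (L2 j)*
   equals c (L1 i h L2 j) d*; multiplying the given expression of a h b by c on the left and by d*
   on the right therefore yields the claim, using only associativity and distributivity.  The
   substance lies in K^alpha G being an associative ring, which is exactly what the 2-cocycle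
   identity guarantees: both bracketings of a triple product of basis elements carry the factors
   alpha(g,h) alpha(gh,k) = alpha(g,hk) alpha(h,k). *)

lemma (in ring) add_pow_int_sandwich:
  assumes "c \<in> carrier R" "x \<in> carrier R" "s \<in> carrier R"
  shows "c \<otimes> ([(k::int)] \<cdot> x) \<otimes> s = [k] \<cdot> (c \<otimes> x \<otimes> s)"
  using assms by (simp add: add_pow_rdistr_int add_pow_ldistr_int)

lemma (in ring) finsum_sandwich:
  assumes "finite I" "c \<in> carrier R" "s \<in> carrier R" "f \<in> I \<rightarrow> carrier R"
  shows "(\<Oplus>i\<in>I. c \<otimes> f i \<otimes> s) = c \<otimes> (\<Oplus>i\<in>I. f i) \<otimes> s"
  using assms by (simp add: finsum_rdistr finsum_ldistr Pi_def)

lemma (in ring) shared_key_identity: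
  fixes z :: "'i \<Rightarrow> 'j \<Rightarrow> int"
  assumes "finite I" "finite J"
    and L1: "\<And>i. i \<in> I \<Longrightarrow> L1 i \<in> carrier R" "\<And>i. i \<in> I \<Longrightarrow> L1 i \<otimes> c = c \<otimes> L1 i"
    and L2: "\<And>j. j \<in> J \<Longrightarrow> L2 j \<in> carrier R" "\<And>j. j \<in> J \<Longrightarrow> star (L2 j) \<in> carrier R"
      "\<And>j. j \<in> J \<Longrightarrow> d \<otimes> star (L2 j) = L2 j \<otimes> star d"
    and carrier: "c \<in> carrier R" "h \<in> carrier R" "d \<in> carrier R" "star d \<in> carrier R"
  shows "(\<Oplus>i\<in>I. \<Oplus>j\<in>J. [z i j] \<cdot> (L1 i \<otimes> (c \<otimes> h \<otimes> d) \<otimes> star (L2 j)))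
       = c \<otimes> (\<Oplus>i\<in>I. \<Oplus>j\<in>J. [z i j] \<cdot> (L1 i \<otimes> h \<otimes> L2 j)) \<otimes> star d"
proof -
  have summand: "L1 i \<otimes> (c \<otimes> h \<otimes> d) \<otimes> star (L2 j) = c \<otimes> (L1 i \<otimes> h \<otimes> L2 j) \<otimes> star d"
    if i: "i \<in> I" and j: "j \<in> J" for i j
  proof -
    have "L1 i \<otimes> (c \<otimes> h \<otimes> d) \<otimes> star (L2 j) = (L1 i \<otimes> c) \<otimes> h \<otimes> (d \<otimes> star (L2 j))"
      using L1(1)[OF i] L2(2)[OF j] carrier by (simp add: m_assoc)
    also have "\<dots> = (c \<otimes> L1 i) \<otimes> h \<otimes> (L2 j \<otimes> star d)"
      by (simp only: L1(2)[OF i] L2(3)[OF j])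
    also have "\<dots> = c \<otimes> (L1 i \<otimes> h \<otimes> L2 j) \<otimes> star d"
      using L1(1)[OF i] L2(1)[OF j] carrier by (simp add: m_assoc)
    finally show ?thesis .
  qed
  have "(\<Oplus>i\<in>I. \<Oplus>j\<in>J. [z i j] \<cdot> (L1 i \<otimes> (c \<otimes> h \<otimes> d) \<otimes> star (L2 j)))
      = (\<Oplus>i\<in>I. \<Oplus>j\<in>J. c \<otimes> ([z i j] \<cdot> (L1 i \<otimes> h \<otimes> L2 j)) \<otimes> star d)"
    using L1(1) L2(1) carrier
    by (intro finsum_cong' refl) (auto simp: summand add_pow_int_sandwich)
  also have "\<dots> = (\<Oplus>i\<in>I. c \<otimes> (\<Oplus>j\<in>J. [z i j] \<cdot> (L1 i \<otimes> h \<otimes> L2 j)) \<otimes> star d)"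
    using \<open>finite J\<close> L1(1) L2(1) carrier
    by (intro finsum_cong' refl finsum_sandwich) auto
  also have "\<dots> = c \<otimes> (\<Oplus>i\<in>I. \<Oplus>j\<in>J. [z i j] \<cdot> (L1 i \<otimes> h \<otimes> L2 j)) \<otimes> star d"
    using \<open>finite I\<close> L1(1) L2(1) carrier
    by (intro finsum_sandwich) auto
  finally show ?thesis .
qed

abbreviation supp :: "('a \<Rightarrow> 'b::zero) \<Rightarrow> 'a set" where
  "supp f \<equiv> {x. f x \<noteq> 0}"

lemma sum_fibres_mult:
  fixes P :: "'x \<Rightarrow> 'y \<Rightarrow> 'a::comm_semiring_0"
  assumes "finite U" "\<And>g k. g \<in> A \<Longrightarrow> k \<in> B \<Longrightarrow> \<phi> g k \<in> U"
  shows "(\<Sum>u\<in>U. (\<Sum>g\<in>A. \<Sum>k\<in>B. if \<phi> g k = u then P g k else 0) * Q u)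
       = (\<Sum>g\<in>A. \<Sum>k\<in>B. P g k * Q (\<phi> g k))"
proof -
  have "(\<Sum>u\<in>U. (\<Sum>g\<in>A. \<Sum>k\<in>B. if \<phi> g k = u then P g k else 0) * Q u)
      = (\<Sum>g\<in>A. \<Sum>k\<in>B. \<Sum>u\<in>U. if \<phi> g k = u then P g k * Q u else 0)"
    by (simp add: sum_distrib_right if_distrib[of "\<lambda>v. v * _"] sum.swap[of _ U] cong: if_cong)
  then show ?thesis
    using assms by simp
qed

lemma tw_carrierD:
  assumes "f \<in> tw_carrier G"
  shows "finite (supp f)" "supp f \<subseteq> carrier G"
  using assms unfolding tw_carrier_def by auto

lemma tw_mult_eq_sum:
  assumes "finite A" "finite B" "supp f \<subseteq> A" "supp h \<subseteq> B"
  shows "tw_mult G \<alpha> f h x = (\<Sum>g\<in>A. \<Sum>k\<in>B. if g \<otimes>\<^bsub>G\<^esub> k = x then f g * h k * \<alpha> g k else 0)"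
proof -
  have "tw_mult G \<alpha> f h x = (\<Sum>(g,k)\<in>A \<times> B. if g \<otimes>\<^bsub>G\<^esub> k = x then f g * h k * \<alpha> g k else 0)"
    unfolding tw_mult_def
    by (rule sum.mono_neutral_cong_left) (use assms in \<open>auto split: if_splits\<close>)
  then show ?thesis
    by (simp add: sum.cartesian_product)
qed

lemma tw_mult_supp:
  "supp (tw_mult G \<alpha> f h) \<subseteq> (\<lambda>(g, k). g \<otimes>\<^bsub>G\<^esub> k) ` (supp f \<times> supp h)"
proof
  fix x assume "x \<in> supp (tw_mult G \<alpha> f h)"
  then have "tw_mult G \<alpha> f h x \<noteq> 0"
    by simp
  then have "{(g, k). f g \<noteq> 0 \<and> h k \<noteq> 0 \<and> g \<otimes>\<^bsub>G\<^esub> k = x} \<noteq> {}"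
    unfolding tw_mult_def by (rule contrapos_nn) (simp only: sum.empty)
  then show "x \<in> (\<lambda>(g, k). g \<otimes>\<^bsub>G\<^esub> k) ` (supp f \<times> supp h)"
    by force
qed

lemma tw_mult_closed:
  assumes G: "monoid G" and f: "f \<in> tw_carrier G" and h: "h \<in> tw_carrier G"
  shows "tw_mult G \<alpha> f h \<in> tw_carrier G"
proof -
  let ?I = "(\<lambda>(g, k). g \<otimes>\<^bsub>G\<^esub> k) ` (supp f \<times> supp h)"
  have "?I \<subseteq> carrier G"
    using tw_carrierD(2)[OF f] tw_carrierD(2)[OF h] monoid.m_closed[OF G] by auto
  moreover have "finite ?I"
    using tw_carrierD(1)[OF f] tw_carrierD(1)[OF h] by simp
  ultimately have "finite (supp (tw_mult G \<alpha> f h))" "supp (tw_mult G \<alpha> f h) \<subseteq> carrier G"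
    using tw_mult_supp[of G \<alpha> f h] by (blast intro: finite_subset)+
  then show ?thesis
    unfolding tw_carrier_def by blast
qed

lemma tw_mult_nested_left_eq_sum:
  assumes f: "f \<in> tw_carrier G" and h: "h \<in> tw_carrier G" and l: "l \<in> tw_carrier G"
  shows "tw_mult G \<alpha> (tw_mult G \<alpha> f h) l x =
    (\<Sum>g\<in>supp f. \<Sum>k\<in>supp h. \<Sum>m\<in>supp l. if (g \<otimes>\<^bsub>G\<^esub> k) \<otimes>\<^bsub>G\<^esub> m = x
       then f g * h k * l m * (\<alpha> g k * \<alpha> (g \<otimes>\<^bsub>G\<^esub> k) m) else 0)"
proof -
  define U where "U = (\<lambda>(g, k). g \<otimes>\<^bsub>G\<^esub> k) ` (supp f \<times> supp h)"
  define Q where "Q u = (\<Sum>m\<in>supp l. if u \<otimes>\<^bsub>G\<^esub> m = x then l m * \<alpha> u m else 0)" for u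
  have fin: "finite (supp f)" "finite (supp h)" "finite (supp l)" "finite U"
    using tw_carrierD(1)[OF f] tw_carrierD(1)[OF h] tw_carrierD(1)[OF l] by (simp_all add: U_def)
  have "tw_mult G \<alpha> (tw_mult G \<alpha> f h) l x = (\<Sum>u\<in>U. tw_mult G \<alpha> f h u * Q u)"
    using fin tw_mult_supp[of G \<alpha> f h]
    by (simp add: tw_mult_eq_sum[of U "supp l"] U_def Q_def sum_distrib_left mult.assoc
        if_distrib[of "\<lambda>v. _ * v"] cong: if_cong)
  also have "\<dots> = (\<Sum>u\<in>U. (\<Sum>g\<in>supp f. \<Sum>k\<in>supp h.
      if g \<otimes>\<^bsub>G\<^esub> k = u then f g * h k * \<alpha> g k else 0) * Q u)"
    using fin by (simp add: tw_mult_eq_sum)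
  also have "\<dots> = (\<Sum>g\<in>supp f. \<Sum>k\<in>supp h. f g * h k * \<alpha> g k * Q (g \<otimes>\<^bsub>G\<^esub> k))"
    by (rule sum_fibres_mult) (auto simp: fin U_def)
  finally show ?thesis
    by (simp add: Q_def sum_distrib_left if_distrib[of "\<lambda>v. _ * v"] ac_simps cong: if_cong)
qed

lemma tw_mult_nested_right_eq_sum:
  assumes f: "f \<in> tw_carrier G" and h: "h \<in> tw_carrier G" and l: "l \<in> tw_carrier G"
  shows "tw_mult G \<alpha> f (tw_mult G \<alpha> h l) x =
    (\<Sum>g\<in>supp f. \<Sum>k\<in>supp h. \<Sum>m\<in>supp l. if g \<otimes>\<^bsub>G\<^esub> (k \<otimes>\<^bsub>G\<^esub> m) = x
       then f g * h k * l m * (\<alpha> g (k \<otimes>\<^bsub>G\<^esub> m) * \<alpha> k m) else 0)"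
proof -
  define V where "V = (\<lambda>(k, m). k \<otimes>\<^bsub>G\<^esub> m) ` (supp h \<times> supp l)"
  define Q where "Q g v = (if g \<otimes>\<^bsub>G\<^esub> v = x then f g * \<alpha> g v else 0)" for g v
  have fin: "finite (supp f)" "finite (supp h)" "finite (supp l)" "finite V"
    using tw_carrierD(1)[OF f] tw_carrierD(1)[OF h] tw_carrierD(1)[OF l] by (simp_all add: V_def)
  have "tw_mult G \<alpha> f (tw_mult G \<alpha> h l) x = (\<Sum>g\<in>supp f. \<Sum>v\<in>V. tw_mult G \<alpha> h l v * Q g v)"
    using fin tw_mult_supp[of G \<alpha> h l]
    by (simp add: tw_mult_eq_sum[of "supp f" V] V_def Q_def if_distrib[of "\<lambda>v. _ * v"] ac_simps
        cong: if_cong)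
  also have "\<dots> = (\<Sum>g\<in>supp f. \<Sum>v\<in>V. (\<Sum>k\<in>supp h. \<Sum>m\<in>supp l.
      if k \<otimes>\<^bsub>G\<^esub> m = v then h k * l m * \<alpha> k m else 0) * Q g v)"
    using fin by (simp add: tw_mult_eq_sum)
  also have "\<dots> = (\<Sum>g\<in>supp f. \<Sum>k\<in>supp h. \<Sum>m\<in>supp l. h k * l m * \<alpha> k m * Q g (k \<otimes>\<^bsub>G\<^esub> m))"
    by (intro sum.cong refl sum_fibres_mult) (auto simp: fin V_def)
  also have "\<dots> = (\<Sum>g\<in>supp f. \<Sum>k\<in>supp h. \<Sum>m\<in>supp l. if g \<otimes>\<^bsub>G\<^esub> (k \<otimes>\<^bsub>G\<^esub> m) = x
       then f g * h k * l m * (\<alpha> g (k \<otimes>\<^bsub>G\<^esub> m) * \<alpha> k m) else 0)"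
    by (intro sum.cong refl) (simp add: Q_def ac_simps)
  finally show ?thesis .
qed

lemma tw_mult_assoc:
  assumes G: "monoid G" and \<alpha>: "two_cocycle G \<alpha>"
    and f: "f \<in> tw_carrier G" and h: "h \<in> tw_carrier G" and l: "l \<in> tw_carrier G"
  shows "tw_mult G \<alpha> (tw_mult G \<alpha> f h) l = tw_mult G \<alpha> f (tw_mult G \<alpha> h l)"
proof
  fix x
  have carrier: "g \<in> carrier G" "k \<in> carrier G" "m \<in> carrier G"
    if "g \<in> supp f" "k \<in> supp h" "m \<in> supp l" for g k m
    using that tw_carrierD(2)[OF f] tw_carrierD(2)[OF h] tw_carrierD(2)[OF l] by auto
  have "(g \<otimes>\<^bsub>G\<^esub> k) \<otimes>\<^bsub>G\<^esub> m = g \<otimes>\<^bsub>G\<^esub> (k \<otimes>\<^bsub>G\<^esub> m)"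
    and "\<alpha> g k * \<alpha> (g \<otimes>\<^bsub>G\<^esub> k) m = \<alpha> g (k \<otimes>\<^bsub>G\<^esub> m) * \<alpha> k m"
    if "g \<in> supp f" "k \<in> supp h" "m \<in> supp l" for g k m
    using carrier[OF that] monoid.m_assoc[OF G] \<alpha> unfolding two_cocycle_def by blast+
  then show "tw_mult G \<alpha> (tw_mult G \<alpha> f h) l x = tw_mult G \<alpha> f (tw_mult G \<alpha> h l) x"
    unfolding tw_mult_nested_left_eq_sum[OF f h l] tw_mult_nested_right_eq_sum[OF f h l]
    by (intro sum.cong refl) (simp only:)
qed

lemma tw_mult_add_left:
  assumes f: "f \<in> tw_carrier G" and h: "h \<in> tw_carrier G" and l: "l \<in> tw_carrier G"
  shows "tw_mult G \<alpha> (\<lambda>x. f x + h x) l = (\<lambda>x. tw_mult G \<alpha> f l x + tw_mult G \<alpha> h l x)"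
proof
  fix x
  define A where "A = supp f \<union> supp h"
  have fin: "finite A" "finite (supp l)"
    using tw_carrierD(1)[OF f] tw_carrierD(1)[OF h] tw_carrierD(1)[OF l] by (simp_all add: A_def)
  have supp: "supp f \<subseteq> A" "supp h \<subseteq> A" "supp (\<lambda>x. f x + h x) \<subseteq> A"
    by (auto simp: A_def)
  show "tw_mult G \<alpha> (\<lambda>x. f x + h x) l x = tw_mult G \<alpha> f l x + tw_mult G \<alpha> h l x"
    using fin supp
    by (auto simp: tw_mult_eq_sum[of A "supp l"] sum.distrib[symmetric] distrib_right
        intro!: sum.cong)
qed

lemma tw_mult_add_right:
  assumes f: "f \<in> tw_carrier G" and h: "h \<in> tw_carrier G" and l: "l \<in> tw_carrier G"
  shows "tw_mult G \<alpha> l (\<lambda>x. f x + h x) = (\<lambda>x. tw_mult G \<alpha> l f x + tw_mult G \<alpha> l h x)"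
proof
  fix x
  define A where "A = supp f \<union> supp h"
  have fin: "finite A" "finite (supp l)"
    using tw_carrierD(1)[OF f] tw_carrierD(1)[OF h] tw_carrierD(1)[OF l] by (simp_all add: A_def)
  have supp: "supp f \<subseteq> A" "supp h \<subseteq> A" "supp (\<lambda>x. f x + h x) \<subseteq> A"
    by (auto simp: A_def)
  show "tw_mult G \<alpha> l (\<lambda>x. f x + h x) x = tw_mult G \<alpha> l f x + tw_mult G \<alpha> l h x"
    using fin supp
    by (auto simp: tw_mult_eq_sum[of "supp l" A] sum.distrib[symmetric] distrib_left distrib_right
        intro!: sum.cong)
qed

lemma tw_mult_one_left:
  assumes G: "monoid G" and \<alpha>: "two_cocycle G \<alpha>" and f: "f \<in> tw_carrier G"
  shows "tw_mult G \<alpha> (\<lambda>x. if x = \<one>\<^bsub>G\<^esub> then 1 else 0) f = f"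
proof
  fix x
  have "tw_mult G \<alpha> (\<lambda>x. if x = \<one>\<^bsub>G\<^esub> then 1 else 0) f x
      = (\<Sum>k\<in>supp f. if \<one>\<^bsub>G\<^esub> \<otimes>\<^bsub>G\<^esub> k = x then f k * \<alpha> \<one>\<^bsub>G\<^esub> k else 0)"
    using tw_carrierD(1)[OF f] by (simp add: tw_mult_eq_sum[of "{\<one>\<^bsub>G\<^esub>}" "supp f"] cong: if_cong)
  also have "\<dots> = (\<Sum>k\<in>supp f. if k = x then f k else 0)"
  proof -
    have unit: "\<one>\<^bsub>G\<^esub> \<otimes>\<^bsub>G\<^esub> k = k" "\<alpha> \<one>\<^bsub>G\<^esub> k = 1" if "k \<in> supp f" for k
      using that tw_carrierD(2)[OF f] \<alpha> monoid.l_one[OF G] by (auto simp: two_cocycle_def)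
    then show ?thesis
      by (intro sum.cong refl) (auto simp: unit)
  qed
  also have "\<dots> = f x"
    using tw_carrierD(1)[OF f] by (simp add: sum.delta')
  finally show "tw_mult G \<alpha> (\<lambda>x. if x = \<one>\<^bsub>G\<^esub> then 1 else 0) f x = f x" .
qed

lemma tw_mult_one_right:
  assumes G: "monoid G" and \<alpha>: "two_cocycle G \<alpha>" and f: "f \<in> tw_carrier G"
  shows "tw_mult G \<alpha> f (\<lambda>x. if x = \<one>\<^bsub>G\<^esub> then 1 else 0) = f"
proof
  fix x
  have "tw_mult G \<alpha> f (\<lambda>x. if x = \<one>\<^bsub>G\<^esub> then 1 else 0) x
      = (\<Sum>g\<in>supp f. if g \<otimes>\<^bsub>G\<^esub> \<one>\<^bsub>G\<^esub> = x then f g * \<alpha> g \<one>\<^bsub>G\<^esub> else 0)"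
    using tw_carrierD(1)[OF f] by (simp add: tw_mult_eq_sum[of "supp f" "{\<one>\<^bsub>G\<^esub>}"] cong: if_cong)
  also have "\<dots> = (\<Sum>g\<in>supp f. if g = x then f g else 0)"
  proof -
    have unit: "g \<otimes>\<^bsub>G\<^esub> \<one>\<^bsub>G\<^esub> = g" "\<alpha> g \<one>\<^bsub>G\<^esub> = 1" if "g \<in> supp f" for g
      using that tw_carrierD(2)[OF f] \<alpha> monoid.r_one[OF G] by (auto simp: two_cocycle_def)
    then show ?thesis
      by (intro sum.cong refl) (auto simp: unit)
  qed
  also have "\<dots> = f x"
    using tw_carrierD(1)[OF f] by (simp add: sum.delta')
  finally show "tw_mult G \<alpha> f (\<lambda>x. if x = \<one>\<^bsub>G\<^esub> then 1 else 0) x = f x" .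
qed

lemma ring_twisted_group_ring:
  fixes \<alpha> :: "'g \<Rightarrow> 'g \<Rightarrow> 'k::comm_ring_1"
  assumes G: "monoid G" and \<alpha>: "two_cocycle G \<alpha>"
  shows "ring (twisted_group_ring G \<alpha>)"
proof (rule ringI)
  show "abelian_group (twisted_group_ring G \<alpha>)"
  proof (rule abelian_groupI, goal_cases)
    case (1 x y)
    then show ?case
      by (auto simp: twisted_group_ring_def tw_carrier_def
          intro: finite_subset[of "supp (\<lambda>g. x g + y g)" "supp x \<union> supp y"])
  next
    case (6 x)
    then have "(\<lambda>g. - x g) \<in> tw_carrier G"
      by (simp add: twisted_group_ring_def tw_carrier_def)
    with 6 show ?case
      by (auto simp: twisted_group_ring_def intro!: bexI[of _ "\<lambda>g. - x g"])
  qed (auto simp: twisted_group_ring_def tw_carrier_def add.assoc add.commute)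
  show "monoid (twisted_group_ring G \<alpha>)"
  proof (rule monoidI, goal_cases)
    case 2
    have "supp (\<lambda>x. if x = \<one>\<^bsub>G\<^esub> then 1 else (0::'k)) \<subseteq> {\<one>\<^bsub>G\<^esub>}"
      by auto
    then show ?case
      using monoid.one_closed[OF G]
      by (auto simp: twisted_group_ring_def tw_carrier_def intro: finite_subset)
  qed (simp_all add: twisted_group_ring_def tw_mult_closed[OF G] tw_mult_assoc[OF G \<alpha>]
      tw_mult_one_left[OF G \<alpha>] tw_mult_one_right[OF G \<alpha>])
qed (simp_all add: twisted_group_ring_def tw_mult_add_left tw_mult_add_right)

theorem mainTheorem4:
  fixes G :: "('g, 'b) monoid_scheme"
    and \<alpha> :: "'g \<Rightarrow> 'g \<Rightarrow> 'k::{comm_ring_1, finite}"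
    and R :: "('g \<Rightarrow> 'k) ring"
    and T1 T2 :: "('g \<Rightarrow> 'k) set"
    and star :: "('g \<Rightarrow> 'k) \<Rightarrow> ('g \<Rightarrow> 'k)"
    and n1 n2 :: nat
    and L1 L2 :: "nat \<Rightarrow> ('g \<Rightarrow> 'k)"
    and h a b c d :: "'g \<Rightarrow> 'k"
    and z :: "nat \<Rightarrow> nat \<Rightarrow> int"
  assumes G: "group G"
    and cocycle: "two_cocycle G \<alpha>"
    and R_def: "R = twisted_group_ring G \<alpha>"
    and T1: "T1 \<subseteq> carrier R"
    and T2: "T2 \<subseteq> carrier R"
    and T1_comm: "\<forall>x\<in>T1. \<forall>y\<in>T1. x \<otimes>\<^bsub>R\<^esub> y = y \<otimes>\<^bsub>R\<^esub> x"
    and star_into: "\<forall>x\<in>T2. star x \<in> carrier R"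
    and star_prop: "\<forall>x\<in>T2. \<forall>y\<in>T2. x \<otimes>\<^bsub>R\<^esub> star y = y \<otimes>\<^bsub>R\<^esub> star x"
    and L1: "\<forall>i\<in>{1..n1}. L1 i \<in> T1"
    and L2: "\<forall>j\<in>{1..n2}. L2 j \<in> T2"
    and h: "h \<in> carrier R"
    and a: "a \<in> T1" and c: "c \<in> T1"
    and b: "b \<in> T2" and d: "d \<in> T2"
    and hyp: "a \<otimes>\<^bsub>R\<^esub> h \<otimes>\<^bsub>R\<^esub> b =
      (\<Oplus>\<^bsub>R\<^esub>i\<in>{1..n1}. \<Oplus>\<^bsub>R\<^esub>j\<in>{1..n2}.
         add_pow R (z i j) (L1 i \<otimes>\<^bsub>R\<^esub> h \<otimes>\<^bsub>R\<^esub> L2 j))"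
  shows "(\<Oplus>\<^bsub>R\<^esub>i\<in>{1..n1}. \<Oplus>\<^bsub>R\<^esub>j\<in>{1..n2}.
           add_pow R (z i j) (L1 i \<otimes>\<^bsub>R\<^esub> (c \<otimes>\<^bsub>R\<^esub> h \<otimes>\<^bsub>R\<^esub> d) \<otimes>\<^bsub>R\<^esub> star (L2 j)))
       = c \<otimes>\<^bsub>R\<^esub> a \<otimes>\<^bsub>R\<^esub> h \<otimes>\<^bsub>R\<^esub> b \<otimes>\<^bsub>R\<^esub> star d"
proof -
  interpret ring R
    using ring_twisted_group_ring[OF group.is_monoid[OF G] cocycle] R_def by simp
  have "(\<Oplus>\<^bsub>R\<^esub>i\<in>{1..n1}. \<Oplus>\<^bsub>R\<^esub>j\<in>{1..n2}.
           add_pow R (z i j) (L1 i \<otimes>\<^bsub>R\<^esub> (c \<otimes>\<^bsub>R\<^esub> h \<otimes>\<^bsub>R\<^esub> d) \<otimes>\<^bsub>R\<^esub> star (L2 j)))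
      = c \<otimes>\<^bsub>R\<^esub> (a \<otimes>\<^bsub>R\<^esub> h \<otimes>\<^bsub>R\<^esub> b) \<otimes>\<^bsub>R\<^esub> star d"
    unfolding hyp
    by (rule shared_key_identity) (use T1 T2 T1_comm star_into star_prop L1 L2 h c d in auto)
  also have "\<dots> = c \<otimes>\<^bsub>R\<^esub> a \<otimes>\<^bsub>R\<^esub> h \<otimes>\<^bsub>R\<^esub> b \<otimes>\<^bsub>R\<^esub> star d"
  proof -
    have "a \<in> carrier R" "b \<in> carrier R" "c \<in> carrier R" "star d \<in> carrier R"
      using T1 T2 a b c d star_into by auto
    then show ?thesis
      using h by (simp add: m_assoc)
  qed
  finally show ?thesis .
qed

end
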